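(* Suppose an $N\times N$ Hadamard matrix exists for some positive integer $N$. Then for every integer $k\ge 0$ and every positive integer $M\le 2^kN$, there exists an equal norm tight integer frame (ENTIF) with $2^kN$ elements in $\mathcal{H}_M$.
   Context: An $N\times N$ Hadamard matrix is a matrix $H$ with all entries in $\{1,-1\}$ satisfying $H^TH=N I_N$. $\mathcal{H}_M$ is the real $M$-dimensional Hilbert space, identified with $\mathbb{R}^M$ via a fixed orthonormal basis. An ENTIF with $N$ elements in $\mathcal{H}_M$ is a family of $N$ vectors with integer coordinates that forms a frame for $\mathbb{R}^M$ which is tight and equal norm; equivalently, an $M\times N$ integer matrix $A$ of rank $M$ with $AA^T=\lambda I_M$ for some $\lambda>0$ and all columns of the same Euclidean norm. *)

theory Defs
  imports Complex_Main
begin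

text \<open>Matrices of varying size are represented as functions nat => nat => int,
  only entries with indices inside the stated bounds matter.\<close>

definition hadamard :: "nat \<Rightarrow> (nat \<Rightarrow> nat \<Rightarrow> int) \<Rightarrow> bool" where
  "hadamard N H \<longleftrightarrow>
     (\<forall>i<N. \<forall>j<N. H i j = 1 \<or> H i j = -1) \<and>
     (\<forall>i<N. \<forall>j<N. (\<Sum>l<N. H l i * H l j) = (if i = j then int N else 0))"

text \<open>An ENTIF with N elements in H_M: an M x N integer matrix A (columns are the
  frame vectors) of rank M with A A^T = lambda I_M for some lambda > 0 and all
  columns of the same Euclidean norm. Rank M is expressed as linear independence
  of the M rows over the reals.\<close>

definition entif :: "nat \<Rightarrow> nat \<Rightarrow> (nat \<Rightarrow> nat \<Rightarrow> int) \<Rightarrow> bool" where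
  "entif M N A \<longleftrightarrow>
     (\<forall>c :: nat \<Rightarrow> real. (\<forall>j<N. (\<Sum>i<M. c i * real_of_int (A i j)) = 0) \<longrightarrow> (\<forall>i<M. c i = 0)) \<and>
     (\<exists>lam::int. lam > 0 \<and> (\<forall>i<M. \<forall>i'<M. (\<Sum>j<N. A i j * A i' j) = (if i = i' then lam else 0))) \<and>
     (\<forall>j<N. \<forall>j'<N. (\<Sum>i<M. (A i j)^2) = (\<Sum>i<M. (A i j')^2))"

end

theory Submission
  imports Defs
begin

text \<open>Sylvester's doubling [[H, H], [H, -H]] turns an N \<times> N Hadamard matrix into a
  2N \<times> 2N one, so Hadamard matrices of every order 2^k N exist. For M \<le> 2^k N, the
  first M columns of such a matrix, read as rows, form an ENTIF: they are pairwise
  orthogonal of squared norm 2^k N, which gives both tightness and full rank, and every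
  frame vector has M entries \<plusminus>1, hence squared norm M.\<close>

lemma sum_lessThan_double:
  fixes f :: "nat \<Rightarrow> 'a::comm_monoid_add"
  shows "(\<Sum>l<2*n. f l) = (\<Sum>l<n. f l) + (\<Sum>l<n. f (l + n))"
proof -
  have "{..<2*n} = {..<n} \<union> {n..<n+n}" by auto
  hence "(\<Sum>l<2*n. f l) = (\<Sum>l<n. f l) + (\<Sum>l\<in>{n..<n+n}. f l)"
    by (simp add: sum.union_disjoint ivl_disj_int)
  also have "(\<Sum>l\<in>{n..<n+n}. f l) = (\<Sum>l<n. f (l + n))"
    using sum.shift_bounds_nat_ivl[of f 0 n n] by (simp add: lessThan_atLeast0 add.commute)
  finally show ?thesis .
qed

definition sylvester_double :: "nat \<Rightarrow> (nat \<Rightarrow> nat \<Rightarrow> int) \<Rightarrow> nat \<Rightarrow> nat \<Rightarrow> int" where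
  "sylvester_double n H i j =
     (if i < n then (if j < n then H i j else H i (j - n))
      else (if j < n then H (i - n) j else - H (i - n) (j - n)))"

lemma hadamard_sylvester_double:
  assumes "hadamard n H"
  shows "hadamard (2*n) (sylvester_double n H)"
  unfolding hadamard_def
proof (intro conjI allI impI)
  let ?D = "sylvester_double n H"
  have entries: "\<And>i j. i < n \<Longrightarrow> j < n \<Longrightarrow> H i j = 1 \<or> H i j = -1"
    and orth: "\<And>i j. i < n \<Longrightarrow> j < n \<Longrightarrow> (\<Sum>l<n. H l i * H l j) = (if i = j then int n else 0)"
    using assms unfolding hadamard_def by auto
  fix i j assume i: "i < 2*n" and j: "j < 2*n"
  show "?D i j = 1 \<or> ?D i j = -1"
    using entries[of i j] entries[of "i-n" j] entries[of i "j-n"] entries[of "i-n" "j-n"] i j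
    unfolding sylvester_double_def by auto
  define i' where "i' = (if i < n then i else i - n)"
  define j' where "j' = (if j < n then j else j - n)"
  have "i' < n" "j' < n" using i j by (auto simp: i'_def j'_def)
  have upper: "(\<Sum>l<n. ?D l i * ?D l j) = (\<Sum>l<n. H l i' * H l j')"
    by (rule sum.cong) (auto simp: sylvester_double_def i'_def j'_def)
  have lower: "(\<Sum>l<n. ?D (l + n) i * ?D (l + n) j) =
      (if (i < n) = (j < n) then 1 else -1) * (\<Sum>l<n. H l i' * H l j')"
    by (auto simp: sylvester_double_def i'_def j'_def sum_distrib_left sum_negf intro!: sum.cong)
  show "(\<Sum>l<2*n. ?D l i * ?D l j) = (if i = j then int (2*n) else 0)"
    unfolding sum_lessThan_double upper lower orth[OF \<open>i' < n\<close> \<open>j' < n\<close>]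
    using i j by (auto simp: i'_def j'_def)
qed

lemma hadamard_exists_pow2_mult:
  assumes "hadamard N H"
  shows "\<exists>H'. hadamard (2^k * N) H'"
proof (induction k)
  case 0
  then show ?case using assms by auto
next
  case (Suc k)
  then obtain H' where "hadamard (2^k * N) H'" by auto
  from hadamard_sylvester_double[OF this] show ?case by (auto simp: mult.assoc)
qed

lemma orthogonal_rows_independent:
  fixes A :: "nat \<Rightarrow> nat \<Rightarrow> int"
  assumes "lam \<noteq> 0"
    and orth: "\<And>i i'. i < M \<Longrightarrow> i' < M \<Longrightarrow> (\<Sum>j<n. A i j * A i' j) = (if i = i' then lam else 0)"
    and zero: "\<forall>j<n. (\<Sum>i<M. c i * real_of_int (A i j)) = 0"
    and "i0 < M"
  shows "c i0 = 0"
proof -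
  have "0 = (\<Sum>j<n. (\<Sum>i<M. c i * real_of_int (A i j)) * real_of_int (A i0 j))"
    using zero by simp
  also have "\<dots> = (\<Sum>i<M. c i * real_of_int (\<Sum>j<n. A i j * A i0 j))"
    by (simp add: sum_distrib_left sum_distrib_right mult.assoc sum.swap[of _ "{..<n}"])
  also have "\<dots> = (\<Sum>i<M. if i = i0 then c i * real_of_int lam else 0)"
    by (rule sum.cong) (use \<open>i0 < M\<close> orth in auto)
  also have "\<dots> = c i0 * real_of_int lam"
    using \<open>i0 < M\<close> by simp
  finally show ?thesis
    using \<open>lam \<noteq> 0\<close> by simp
qed

lemma entif_hadamard_columns:
  assumes "hadamard n H" and "0 < M" and "M \<le> n"
  shows "entif M n (\<lambda>i j. H j i)"
proof -
  have entries: "\<And>i j. i < n \<Longrightarrow> j < n \<Longrightarrow> H i j = 1 \<or> H i j = -1"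
    and orth: "\<And>i i'. i < M \<Longrightarrow> i' < M \<Longrightarrow> (\<Sum>j<n. H j i * H j i') = (if i = i' then int n else 0)"
    using assms unfolding hadamard_def by auto
  have "int n > 0" using assms(2,3) by auto
  have squares: "\<And>i j. i < n \<Longrightarrow> j < n \<Longrightarrow> (H i j)^2 = 1"
    using entries by (metis power2_minus one_power2)
  show ?thesis
    unfolding entif_def
  proof (intro conjI allI impI)
    fix c :: "nat \<Rightarrow> real" and i0
    assume "\<forall>j<n. (\<Sum>i<M. c i * real_of_int (H j i)) = 0" and "i0 < M"
    with \<open>int n > 0\<close> show "c i0 = 0"
      by (intro orthogonal_rows_independent[where A="\<lambda>i j. H j i", OF _ orth]) auto
  next
    show "\<exists>lam>0. \<forall>i<M. \<forall>i'<M. (\<Sum>j<n. H j i * H j i') = (if i = i' then lam else 0)"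
      using \<open>int n > 0\<close> orth by blast
  next
    fix j j' assume "j < n" "j' < n"
    then show "(\<Sum>i<M. (H j i)^2) = (\<Sum>i<M. (H j' i)^2)"
      using squares assms(3) by simp
  qed
qed

theorem theorem3p5:
  fixes N :: nat and H :: "nat \<Rightarrow> nat \<Rightarrow> int"
  assumes "N > 0" and "hadamard N H"
  shows "\<forall>k M. 0 < M \<and> M \<le> 2^k * N \<longrightarrow> (\<exists>A. entif M (2^k * N) A)"
proof (intro allI impI)
  fix k M assume "0 < M \<and> M \<le> 2^k * N"
  moreover obtain H' where "hadamard (2^k * N) H'"
    using hadamard_exists_pow2_mult[OF assms(2)] by auto
  ultimately show "\<exists>A. entif M (2^k * N) A"
    using entif_hadamard_columns by blast
qed

end
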